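(* Let $n\ge 5$. Then the metric dimension of $L(n)$ is $n-2$.
   Context: For $n\ge 5$, $H(n)$ is the graph with vertex set $V_1\cup V_2$, where $V_1=\{v_1,\dots,v_n\}$ and $V_2=\{v_iv_j: 1\le i<j\le n\}$, and $v_r$ is adjacent to $v_iv_j$ iff $r\in\{i,j\}$ (no other edges). $L(n)$ is the line graph of $H(n)$: its vertices are the edges of $H(n)$, two being adjacent iff they share an endpoint. $d$ is the shortest-path distance; a set $Q$ of vertices is a resolving set of $G$ if any two distinct vertices $x,y$ satisfy $(d(x,q))_{q\in Q}\neq(d(y,q))_{q\in Q}$; the metric dimension is the minimum size of a resolving set. *)

theory Defs
  imports Main "HOL-Library.Extended_Nat"
begin

inductive walk :: "'a set \<Rightarrow> ('a \<Rightarrow> 'a \<Rightarrow> bool) \<Rightarrow> nat \<Rightarrow> 'a \<Rightarrow> 'a \<Rightarrow> bool"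
  for V adj where
  walk0: "x \<in> V \<Longrightarrow> walk V adj 0 x x"
| walkS: "walk V adj k x y \<Longrightarrow> adj y z \<Longrightarrow> z \<in> V \<Longrightarrow> walk V adj (Suc k) x z"

text \<open>Shortest-path distance (infinite if no walk exists).\<close>
definition gdist :: "'a set \<Rightarrow> ('a \<Rightarrow> 'a \<Rightarrow> bool) \<Rightarrow> 'a \<Rightarrow> 'a \<Rightarrow> enat" where
  "gdist V adj x y = (INF k \<in> {k. walk V adj k x y}. enat k)"

definition resolving_set :: "'a set \<Rightarrow> ('a \<Rightarrow> 'a \<Rightarrow> bool) \<Rightarrow> 'a set \<Rightarrow> bool" where
  "resolving_set V adj Q \<longleftrightarrow> Q \<subseteq> V \<and>
     (\<forall>x\<in>V. \<forall>y\<in>V. x \<noteq> y \<longrightarrow> (\<exists>q\<in>Q. gdist V adj x q \<noteq> gdist V adj y q))"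

definition metric_dimension :: "'a set \<Rightarrow> ('a \<Rightarrow> 'a \<Rightarrow> bool) \<Rightarrow> nat" where
  "metric_dimension V adj = (LEAST k. \<exists>Q. finite Q \<and> card Q = k \<and> resolving_set V adj Q)"

text \<open>Vertices of H(n): Inl r for v_r (1 \<le> r \<le> n), Inr {i,j} for v_iv_j (1 \<le> i < j \<le> n).
  Edges are 2-element sets of vertices.\<close>

definition H_vertices :: "nat \<Rightarrow> (nat + nat set) set" where
  "H_vertices n = Inl ` {1..n} \<union> {Inr {i, j} | i j. 1 \<le> i \<and> i < j \<and> j \<le> n}"

definition H_edges :: "nat \<Rightarrow> (nat + nat set) set set" where
  "H_edges n = {{Inl r, Inr {i, j}} | r i j. 1 \<le> i \<and> i < j \<and> j \<le> n \<and> r \<in> {i, j}}"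

definition line_adj :: "'a set \<Rightarrow> 'a set \<Rightarrow> bool" where
  "line_adj e f \<longleftrightarrow> e \<noteq> f \<and> e \<inter> f \<noteq> {}"

definition L_vertices :: "nat \<Rightarrow> (nat + nat set) set set" where
  "L_vertices n = H_edges n"

end

theory Submission
  imports Defs
begin

text \<open>
  A vertex of L(n), i.e. an edge of H(n) joining v_r to v_rv_s, is the same as an ordered pair
  (r, s) with r \<noteq> s; two pairs are adjacent iff they have the same first entry or are reverses
  of each other. This graph has diameter 3 and an explicit distance formula. The n - 2 pairs
  (r, n) with r \<le> n - 2 resolve it: the distance pattern of (a, b) to them marks a (distance
  at most 1), marks b, and its remaining entries are 2 or 3 according as a = n or not, so it
  determines (a, b) once n - 2 \<ge> 3. Conversely, if |Q| \<le> n - 3 then three vertices r, s, t are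
  first entries of no element of Q, and (r, s), (r, t) have the same distance to every element
  of Q.
\<close>

lemma walk_in_vertices: "walk V adj k x y \<Longrightarrow> x \<in> V \<and> y \<in> V"
  by (induction rule: walk.induct) auto

lemma walk_potential_le:
  assumes "walk V adj k x y"
    and "\<And>u w. u \<in> V \<Longrightarrow> w \<in> V \<Longrightarrow> adj u w \<Longrightarrow> f w \<le> Suc (f u)"
  shows "f y \<le> f x + k"
  using assms(1)
proof (induction rule: walk.induct)
  case (walkS k x y z)
  then show ?case using assms(2)[of y z] walk_in_vertices by fastforce
qed simp

lemma gdist_eqI:
  assumes "walk V adj k x y" and "\<And>m. walk V adj m x y \<Longrightarrow> k \<le> m"
  shows "gdist V adj x y = enat k"
  unfolding gdist_def using assms by (intro antisym INF_lower2 INF_greatest) auto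

locale graph_isomorphism =
  fixes V :: "'a set" and adj :: "'a \<Rightarrow> 'a \<Rightarrow> bool"
    and h :: "'a \<Rightarrow> 'b" and adj' :: "'b \<Rightarrow> 'b \<Rightarrow> bool"
  assumes inj: "inj_on h V"
    and adj_iff: "\<And>u w. u \<in> V \<Longrightarrow> w \<in> V \<Longrightarrow> adj' (h u) (h w) \<longleftrightarrow> adj u w"
begin

lemma walk_image_iff:
  assumes x: "x \<in> V" and y: "y \<in> V"
  shows "walk (h ` V) adj' k (h x) (h y) \<longleftrightarrow> walk V adj k x y"
proof
  have "\<exists>y\<in>V. y' = h y \<and> walk V adj k x y" if "walk (h ` V) adj' k x' y'" "x' = h x" for x' y'
    using that
  proof (induction rule: walk.induct)
    case (walk0 x')
    then show ?case using x by (auto intro: walk.walk0)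
  next
    case (walkS k x' y' z')
    then obtain y where "y \<in> V" "y' = h y" "walk V adj k x y" by blast
    moreover obtain z where "z \<in> V" "z' = h z" using walkS.hyps(3) by blast
    ultimately show ?case using walkS.hyps(2) adj_iff by (auto intro: walk.walkS)
  qed
  then show "walk V adj k x y" if "walk (h ` V) adj' k (h x) (h y)"
    using that inj x y by (metis inj_on_def)
next
  show "walk (h ` V) adj' k (h x) (h y)" if "walk V adj k x y"
    using that by (induction rule: walk.induct) (auto intro: walk.intros simp: adj_iff walk_in_vertices)
qed

lemma gdist_image:
  "x \<in> V \<Longrightarrow> y \<in> V \<Longrightarrow> gdist (h ` V) adj' (h x) (h y) = gdist V adj x y"
  unfolding gdist_def by (simp add: walk_image_iff)

lemma resolving_set_image:
  assumes "Q \<subseteq> V"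
  shows "resolving_set (h ` V) adj' (h ` Q) \<longleftrightarrow> resolving_set V adj Q"
  using assms gdist_image inj_on_eq_iff[OF inj]
  unfolding resolving_set_def by (auto 0 4 simp: subset_iff)

lemma metric_dimension_image: "metric_dimension (h ` V) adj' = metric_dimension V adj"
proof -
  have "(\<exists>Q'. finite Q' \<and> card Q' = k \<and> resolving_set (h ` V) adj' Q') \<longleftrightarrow>
        (\<exists>Q. finite Q \<and> card Q = k \<and> resolving_set V adj Q)" for k
  proof
    assume "\<exists>Q'. finite Q' \<and> card Q' = k \<and> resolving_set (h ` V) adj' Q'"
    then obtain Q' where Q': "finite Q'" "card Q' = k" "resolving_set (h ` V) adj' Q'" by blast
    then obtain Q where "Q \<subseteq> V" "Q' = h ` Q"
      unfolding resolving_set_def by (auto simp: subset_image_iff)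
    moreover have "inj_on h Q" using inj \<open>Q \<subseteq> V\<close> by (rule inj_on_subset)
    ultimately show "\<exists>Q. finite Q \<and> card Q = k \<and> resolving_set V adj Q"
      using Q' resolving_set_image by (metis card_image finite_image_iff)
  next
    assume "\<exists>Q. finite Q \<and> card Q = k \<and> resolving_set V adj Q"
    then obtain Q where Q: "finite Q" "card Q = k" "resolving_set V adj Q" by blast
    then have "Q \<subseteq> V" by (simp add: resolving_set_def)
    then have "inj_on h Q" using inj by (rule inj_on_subset[rotated])
    then show "\<exists>Q'. finite Q' \<and> card Q' = k \<and> resolving_set (h ` V) adj' Q'"
      using Q \<open>Q \<subseteq> V\<close> resolving_set_image by (metis card_image finite_imageI)
  qed
  then show ?thesis unfolding metric_dimension_def by simp
qed

end

lemma metric_dimension_eqI: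
  assumes "finite Q" "card Q = k" "resolving_set V adj Q"
    and "\<And>Q. finite Q \<Longrightarrow> resolving_set V adj Q \<Longrightarrow> k \<le> card Q"
  shows "metric_dimension V adj = k"
  unfolding metric_dimension_def using assms by (intro Least_equality) auto

text \<open>The pair (r, s) stands for the vertex \<open>flag (r, s)\<close> of L(n) defined below.\<close>

definition arcs :: "nat \<Rightarrow> (nat \<times> nat) set" where
  "arcs n = {(r, s). r \<in> {1..n} \<and> s \<in> {1..n} \<and> r \<noteq> s}"

fun arc_adj :: "nat \<times> nat \<Rightarrow> nat \<times> nat \<Rightarrow> bool" where
  "arc_adj (a, b) (c, d) \<longleftrightarrow> (a, b) \<noteq> (c, d) \<and> (a = c \<or> (a = d \<and> b = c))"

fun arc_dist :: "nat \<times> nat \<Rightarrow> nat \<times> nat \<Rightarrow> nat" where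
  "arc_dist (a, b) (c, d) =
     (if (a, b) = (c, d) then 0 else if a = c \<or> (a = d \<and> b = c) then 1
      else if b = c \<or> a = d then 2 else 3)"

lemma arc_dist_adj_le:
  assumes "arc_adj (c, d) (e, f)" "a \<noteq> b" "c \<noteq> d" "e \<noteq> f"
  shows "arc_dist (a, b) (e, f) \<le> Suc (arc_dist (a, b) (c, d))"
  using assms by auto

lemma walk_arc_dist:
  assumes x: "x \<in> arcs n" and y: "y \<in> arcs n"
  shows "walk (arcs n) arc_adj (arc_dist x y) x y"
proof -
  obtain a b c d where xy: "x = (a, b)" "y = (c, d)" by fastforce
  have ab: "a \<in> {1..n}" "b \<in> {1..n}" "a \<noteq> b" and cd: "c \<in> {1..n}" "d \<in> {1..n}" "c \<noteq> d"
    using x y xy by (auto simp: arcs_def)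
  have start: "walk (arcs n) arc_adj 0 (a, b) (a, b)"
    using x xy by (simp add: walk.walk0)
  consider "(a, b) = (c, d)" | "(a, b) \<noteq> (c, d)" "a = c \<or> (a = d \<and> b = c)"
    | "b = c" "a \<noteq> c" "a \<noteq> d" | "a = d" "a \<noteq> c" "b \<noteq> c" | "a \<noteq> c" "b \<noteq> c" "a \<noteq> d"
    by blast
  then show ?thesis
  proof cases
    case 1
    then show ?thesis using start xy by simp
  next
    case 2
    have "walk (arcs n) arc_adj (Suc 0) (a, b) (c, d)"
      using start by (rule walk.walkS) (use y xy 2 in auto)
    then show ?thesis using 2 xy by auto
  next
    case 3
    have "walk (arcs n) arc_adj (Suc 0) (a, b) (b, a)"
      using start by (rule walk.walkS) (use ab in \<open>auto simp: arcs_def\<close>)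
    then have "walk (arcs n) arc_adj (Suc (Suc 0)) (a, b) (c, d)"
      by (rule walk.walkS) (use y xy 3 in auto)
    then show ?thesis using 3 xy by (simp add: eval_nat_numeral)
  next
    case 4
    have "walk (arcs n) arc_adj (Suc 0) (a, b) (a, c)"
      using start by (rule walk.walkS) (use ab cd 4 in \<open>auto simp: arcs_def\<close>)
    then have "walk (arcs n) arc_adj (Suc (Suc 0)) (a, b) (c, d)"
      by (rule walk.walkS) (use y xy 4 in auto)
    then show ?thesis using 4 xy by (simp add: eval_nat_numeral)
  next
    case 5
    have "walk (arcs n) arc_adj (Suc 0) (a, b) (a, c)"
      using start by (rule walk.walkS) (use ab cd 5 in \<open>auto simp: arcs_def\<close>)
    then have "walk (arcs n) arc_adj (Suc (Suc 0)) (a, b) (c, a)"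
      by (rule walk.walkS) (use ab cd 5 in \<open>auto simp: arcs_def\<close>)
    then have "walk (arcs n) arc_adj (Suc (Suc (Suc 0))) (a, b) (c, d)"
      by (rule walk.walkS) (use y xy 5 in auto)
    then show ?thesis using 5 xy by (simp add: eval_nat_numeral)
  qed
qed

lemma gdist_arcs:
  assumes "x \<in> arcs n" "y \<in> arcs n"
  shows "gdist (arcs n) arc_adj x y = enat (arc_dist x y)"
proof (rule gdist_eqI)
  show "walk (arcs n) arc_adj (arc_dist x y) x y" using walk_arc_dist[OF assms] .
  show "arc_dist x y \<le> m" if "walk (arcs n) arc_adj m x y" for m
    using walk_potential_le[OF that, of "arc_dist x"] arc_dist_adj_le assms
    by (force simp: arcs_def)
qed

lemma arc_dist_column:
  assumes "r \<noteq> n"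
  shows "arc_dist (a, b) (r, n) =
    (if r = a then (if b = n then 0 else 1) else if r = b then (if a = n then 1 else 2)
     else if a = n then 2 else 3)"
  using assms by auto

lemma ex_avoiding_two: "3 \<le> m \<Longrightarrow> \<exists>r \<in> {1..m::nat}. r \<noteq> a \<and> r \<noteq> b"
  by (rule bexI[of _ "if 1 \<notin> {a, b} then 1 else if 2 \<notin> {a, b} then 2 else 3"]) auto

lemma arc_eq_if_column_dists_eq:
  assumes n: "5 \<le> n" and x: "x \<in> arcs n" and y: "y \<in> arcs n"
    and eq: "\<And>r. r \<in> {1..n-2} \<Longrightarrow> arc_dist x (r, n) = arc_dist y (r, n)"
  shows "x = y"
proof -
  obtain a b c d where xy: "x = (a, b)" "y = (c, d)" by fastforce
  have ab: "a \<in> {1..n}" "b \<in> {1..n}" "a \<noteq> b" and cd: "c \<in> {1..n}" "d \<in> {1..n}" "c \<noteq> d"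
    using x y xy by (auto simp: arcs_def)
  have col: "arc_dist (a, b) (r, n) = arc_dist (c, d) (r, n)" if "r \<in> {1..n-2}" for r
    using eq that xy by simp
  have "3 \<le> n - 2" using n by simp
  \<comment> \<open>r0 and r1 expose the background value of the two distance patterns (see \<open>arc_dist_column\<close>)\<close>
  then obtain r0 r1 where r0: "r0 \<in> {1..n-2}" "r0 \<noteq> a" "r0 \<noteq> b"
    and r1: "r1 \<in> {1..n-2}" "r1 \<noteq> c" "r1 \<noteq> d"
    using ex_avoiding_two by meson
  have a_n: "a = n \<longleftrightarrow> c = n"
    using col[OF r0(1)] col[OF r1(1)] r0 r1 n by (auto simp: arc_dist_column split: if_splits)
  have "a = c"
  proof (rule ccontr)
    assume "a \<noteq> c"
    then have "a \<le> n - 2 \<or> c \<le> n - 2" using a_n ab cd by auto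
    then show False using col[of a] col[of c] a_n ab cd \<open>a \<noteq> c\<close> n
      by (auto simp: arc_dist_column split: if_splits)
  qed
  moreover have "b = d"
  proof (rule ccontr)
    assume "b \<noteq> d"
    then have "b \<le> n - 2 \<or> d \<le> n - 2 \<or> a \<le> n - 2 \<and> (b = n \<or> d = n)" using \<open>a = c\<close> ab cd by auto
    then show False using col[of a] col[of b] col[of d] \<open>a = c\<close> \<open>b \<noteq> d\<close> ab cd n
      by (auto simp: arc_dist_column split: if_splits)
  qed
  ultimately show ?thesis using xy by simp
qed

lemma resolving_set_last_column:
  assumes "5 \<le> n"
  shows "resolving_set (arcs n) arc_adj ((\<lambda>r. (r, n)) ` {1..n-2})"
  unfolding resolving_set_def
proof (intro conjI ballI impI)
  show "(\<lambda>r. (r, n)) ` {1..n-2} \<subseteq> arcs n" using assms by (auto simp: arcs_def)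
  fix x y assume x: "x \<in> arcs n" and y: "y \<in> arcs n" and "x \<noteq> y"
  then obtain r where "r \<in> {1..n-2}" "arc_dist x (r, n) \<noteq> arc_dist y (r, n)"
    using arc_eq_if_column_dists_eq[OF assms x y] by blast
  moreover have "(r, n) \<in> arcs n" using \<open>r \<in> {1..n-2}\<close> assms by (auto simp: arcs_def)
  ultimately show "\<exists>q\<in>(\<lambda>r. (r, n)) ` {1..n-2}. gdist (arcs n) arc_adj x q \<noteq> gdist (arcs n) arc_adj y q"
    using x y by (intro bexI[of _ "(r, n)"] imageI) (simp_all add: gdist_arcs)
qed

lemma arc_dist_eq_if_fst_notin: "a \<notin> {r, s, t} \<Longrightarrow> arc_dist (r, s) (a, b) = arc_dist (r, t) (a, b)"
  by auto

lemma card_resolving_set_arcs_ge: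
  assumes Q: "finite Q" "resolving_set (arcs n) arc_adj Q"
  shows "n - 2 \<le> card Q"
proof (rule ccontr)
  assume "\<not> ?thesis"
  moreover have "card {1..n} - card (fst ` Q) \<le> card ({1..n} - fst ` Q)"
    using Q by (intro diff_card_le_card_Diff) auto
  moreover have "card (fst ` Q) \<le> card Q" using Q by (intro card_image_le)
  ultimately have "3 \<le> card ({1..n} - fst ` Q)" by simp
  then obtain T where "T \<subseteq> {1..n} - fst ` Q" "card T = 3" by (rule obtain_subset_with_card_n)
  then obtain r s t where rst: "r \<in> {1..n} - fst ` Q" "s \<in> {1..n} - fst ` Q" "t \<in> {1..n} - fst ` Q"
    "r \<noteq> s" "r \<noteq> t" "s \<noteq> t"
    by (auto simp: card_3_iff)
  then have "(r, s) \<in> arcs n" "(r, t) \<in> arcs n" "(r, s) \<noteq> (r, t)" by (auto simp: arcs_def)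
  then obtain q where q: "q \<in> Q" "gdist (arcs n) arc_adj (r, s) q \<noteq> gdist (arcs n) arc_adj (r, t) q"
    using Q unfolding resolving_set_def by blast
  have "q \<in> arcs n" using q Q by (auto simp: resolving_set_def)
  obtain a b where "q = (a, b)" by fastforce
  then have "a \<notin> {r, s, t}" using rst q by force
  then show False
    using q \<open>q \<in> arcs n\<close> \<open>q = (a, b)\<close> \<open>(r, s) \<in> arcs n\<close> \<open>(r, t) \<in> arcs n\<close>
    by (simp add: gdist_arcs arc_dist_eq_if_fst_notin)
qed

lemma metric_dimension_arcs:
  assumes "5 \<le> n"
  shows "metric_dimension (arcs n) arc_adj = n - 2"
proof (rule metric_dimension_eqI)
  show "card ((\<lambda>r. (r, n)) ` {1..n-2}) = n - 2" by (simp add: card_image inj_on_def)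
qed (use resolving_set_last_column[OF assms] card_resolving_set_arcs_ge in auto)

fun flag :: "nat \<times> nat \<Rightarrow> (nat + nat set) set" where
  "flag (r, s) = {Inl r, Inr {r, s}}"

lemma inj_flag: "inj flag"
  by (auto simp: inj_def doubleton_eq_iff)

lemma line_adj_flag_iff: "line_adj (flag x) (flag y) \<longleftrightarrow> arc_adj x y"
  by (cases x; cases y) (auto simp: line_adj_def doubleton_eq_iff)

lemma L_vertices_eq: "L_vertices n = flag ` arcs n"
proof (intro equalityI subsetI)
  fix e assume "e \<in> L_vertices n"
  then obtain r i j where e: "e = {Inl r, Inr {i, j}}" "1 \<le> i" "i < j" "j \<le> n" "r \<in> {i, j}"
    by (auto simp: L_vertices_def H_edges_def)
  then have "e = flag (i, j) \<or> e = flag (j, i)" by (auto simp: insert_commute)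
  moreover have "(i, j) \<in> arcs n" "(j, i) \<in> arcs n" using e by (auto simp: arcs_def)
  ultimately show "e \<in> flag ` arcs n" by blast
next
  fix e assume "e \<in> flag ` arcs n"
  then obtain r s where e: "e = flag (r, s)" "r \<in> {1..n}" "s \<in> {1..n}" "r \<noteq> s"
    by (auto simp: arcs_def)
  then have "e = {Inl r, Inr {min r s, max r s}}" "r \<in> {min r s, max r s}"
    by (auto simp: min_def max_def insert_commute)
  moreover have "1 \<le> min r s" "min r s < max r s" "max r s \<le> n" using e by auto
  ultimately show "e \<in> L_vertices n" unfolding L_vertices_def H_edges_def by blast
qed

theorem theorem3p8:
  fixes n :: nat
  assumes "n \<ge> 5"
  shows "metric_dimension (L_vertices n) line_adj = n - 2"
proof -
  interpret graph_isomorphism "arcs n" arc_adj flag line_adj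
    by unfold_locales (auto intro: inj_on_subset[OF inj_flag] simp: line_adj_flag_iff)
  have "metric_dimension (L_vertices n) line_adj = metric_dimension (arcs n) arc_adj"
    using metric_dimension_image by (simp add: L_vertices_eq)
  also have "\<dots> = n - 2" using metric_dimension_arcs[OF assms] .
  finally show ?thesis .
qed

end
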